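(* Let $\mathcal G=(\mathcal V,\mathcal E,W)$ be a network, $h\in\mathbb{R}^{\mathcal V}$, and consider the SNC game with binary actions on $\mathcal G$ with external field $h$, with set of Nash equilibria $\mathcal N$. Let $\mathcal V=\mathcal R\cup\mathcal S$, $\mathcal R\cap\mathcal S=\emptyset$, be a binary partition such that $\mathcal G_{\mathcal R}$ is unsigned. Let $h^-,h^+\in\mathbb{R}^{\mathcal R}$ be given by $h_i^+=h_i+w_i^{\mathcal S}$ and $h_i^-=h_i-w_i^{\mathcal S}$ for $i\in\mathcal R$. Assume $\mathcal G_{\mathcal R}$ is $(h^-,h^+)$-indecomposable and $$w_i^{\mathcal R}-|h_i|>w_i^{\mathcal S}\qquad\forall i\in\mathcal R.$$ Then: (i) if, for every $a\in\{\pm1\}$, the set $\mathcal N_{\mathcal S}^{(a\mathbf 1)}$ is globally BR-reachable for the $\mathcal S$-restricted game with strategy profile of players in $\mathcal R$ frozen to $a\mathbf 1$, then the set $\tilde{\mathcal N}=\{x^*\in\mathcal N:\ x^*_{\mathcal R}\in\{\mathbf 1,-\mathbf 1\}\}$ is nonempty and globally BR-reachable for the SNC game; (ii) if, for every $a\in\{\pm1\}$, there exists a nonempty subset $\bar{\mathcal N}_{\mathcal S}^{(a\mathbf 1)}\subseteq\mathcal N_{\mathcal S}^{(a\mathbf 1)}$ that is globally BR-stable for the $\mathcal S$-restricted game with strategy profile of players in $\mathcal R$ frozen to $a\mathbf 1$, then there exists a nonempty subset $\overline{\mathcal N}\subseteq\tilde{\mathcal N}$ that is globally BR-stable for the SNC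 game.
   Context: A network is a triple $\mathcal G=(\mathcal V,\mathcal E,W)$ where $\mathcal V$ is a finite nonempty set, $\mathcal E\subseteq\mathcal V\times\mathcal V$, and $W\in\mathbb{R}^{\mathcal V\times\mathcal V}$ has zero diagonal and satisfies $W_{ij}\neq0$ iff $(i,j)\in\mathcal E$ (weights may have either sign). It is unsigned if $W\ge0$ entrywise. For $\mathcal U\subseteq\mathcal V$, the subnetwork $\mathcal G_{\mathcal U}$ has node set $\mathcal U$, links $\mathcal E\cap(\mathcal U\times\mathcal U)$ and weight matrix $W_{\mathcal U\mathcal U}$. For $i\in\mathcal V$ and $\mathcal B\subseteq\mathcal V$, $w_i^{\mathcal B}=\sum_{j\in\mathcal B}|W_{ij}|$. $\mathbf 1$ is the all-ones vector. Indecomposability: a network with node set $\mathcal U$ and $h^-\le h^+$ in $\mathbb{R}^{\mathcal U}$ is $(h^-,h^+)$-indecomposable if for every partition $\mathcal U=\mathcal U^-\cup\mathcal U^+$ into two disjoint nonempty sets there is a node $i$ with either $i\in\mathcal U^+$ and $w_i^{\mathcal U^+}+h_i^+<w_i^{\mathcal U^-}$, or $i\in\mathcal U^-$ and $w_i^{\mathcal U^-}-h_i^-<w_i^{\mathcal U^+}$. The SNC game with binary actions on $\mathcal G$ with external field $h\in\mathbb{R}^{\mathcal V}$ has player set $\mathcal V$, action set $\{-1,+1\}$ for each player, strategy profiles $\mathcal X=\{\pm1\}^{\mathcal V}$ (written $x=(x_{\mathcal R},x_{\mathcal S})$), and utilities $u_i(x)=h_ix_i+x_i\sum_{j\in\mathcal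 V}W_{ij}x_j$. Best responses $\mathcal B_i(x_{-i})=\arg\max_{x_i\in\{\pm1\}}u_i(x_i,x_{-i})$; Nash equilibrium: $x^*_i\in\mathcal B_i(x^*_{-i})$ for all $i$. For $y\in\{\pm1\}^{\mathcal R}$, the $\mathcal S$-restricted game with strategy profile of players in $\mathcal R$ frozen to $y$ has player set $\mathcal S$, actions $\{\pm1\}$, and utilities $u_i^{(y)}(z)=u_i(y,z)$ for $i\in\mathcal S$, $z\in\{\pm1\}^{\mathcal S}$; $\mathcal N_{\mathcal S}^{(y)}$ is its set of Nash equilibria. For any game with binary actions and profile set $\mathcal Y$: a BR-path of length $l\ge0$ from $x$ to $y$ is a sequence $x^{(0)}=x,\dots,x^{(l)}=y$ such that for each $k$ some player $i_k$ has $x^{(k)}_{-i_k}=x^{(k-1)}_{-i_k}$ and $x^{(k)}_{i_k}\in\mathcal B_{i_k}(x^{(k-1)}_{-i_k})\setminus\{x^{(k-1)}_{i_k}\}$. A set $\mathcal Y^*\subseteq\mathcal Y$ is globally BR-reachable if from every profile there is a BR-path to some element of $\mathcal Y^*$; BR-invariant if there is no BR-path from an element of $\mathcal Y^*$ to an element outside; globally BR-stable if both. *)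

theory Defs
  imports Complex_Main
begin

text \<open>Networks: node set V = UNIV of a finite type 'v (finite, nonempty);
  the weight matrix is W :: 'v \<Rightarrow> 'v \<Rightarrow> real; the link set is
  implicit, E = {(i,j). W i j \<noteq> 0}.\<close>

definition wsum :: "('v \<Rightarrow> 'v \<Rightarrow> real) \<Rightarrow> 'v \<Rightarrow> 'v set \<Rightarrow> real" where
  "wsum W i B = (\<Sum>j\<in>B. \<bar>W i j\<bar>)"

definition unsigned_on :: "('v \<Rightarrow> 'v \<Rightarrow> real) \<Rightarrow> 'v set \<Rightarrow> bool" where
  "unsigned_on W U \<longleftrightarrow> (\<forall>i\<in>U. \<forall>j\<in>U. W i j \<ge> 0)"

definition indecomposable ::
  "('v \<Rightarrow> 'v \<Rightarrow> real) \<Rightarrow> 'v set \<Rightarrow> ('v \<Rightarrow> real) \<Rightarrow> ('v \<Rightarrow> real) \<Rightarrow> bool" where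
  "indecomposable W U hm hp \<longleftrightarrow>
    (\<forall>Um Up. Um \<inter> Up = {} \<and> Um \<union> Up = U \<and> Um \<noteq> {} \<and> Up \<noteq> {} \<longrightarrow>
       (\<exists>i\<in>Up. wsum W i Up + hp i < wsum W i Um) \<or>
       (\<exists>i\<in>Um. wsum W i Um - hm i < wsum W i Up))"

definition snc_util :: "('v::finite \<Rightarrow> 'v \<Rightarrow> real) \<Rightarrow> ('v \<Rightarrow> real) \<Rightarrow> 'v \<Rightarrow> ('v \<Rightarrow> real) \<Rightarrow> real" where
  "snc_util W h i x = h i * x i + x i * (\<Sum>j\<in>UNIV. W i j * x j)"

definition best_resp :: "('v \<Rightarrow> ('v \<Rightarrow> real) \<Rightarrow> real) \<Rightarrow> 'v \<Rightarrow> ('v \<Rightarrow> real) \<Rightarrow> real set" where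
  "best_resp u i x = {a \<in> {-1, 1}. \<forall>b\<in>{-1, 1}. u i (x(i := b)) \<le> u i (x(i := a))}"

definition br_step :: "'v set \<Rightarrow> ('v \<Rightarrow> ('v \<Rightarrow> real) \<Rightarrow> real) \<Rightarrow> ('v \<Rightarrow> real) \<Rightarrow> ('v \<Rightarrow> real) \<Rightarrow> bool" where
  "br_step P u x y \<longleftrightarrow> (\<exists>i\<in>P. y = x(i := y i) \<and> y i \<noteq> x i \<and> y i \<in> best_resp u i x)"

definition br_path :: "'v set \<Rightarrow> ('v \<Rightarrow> ('v \<Rightarrow> real) \<Rightarrow> real) \<Rightarrow> ('v \<Rightarrow> real) \<Rightarrow> ('v \<Rightarrow> real) \<Rightarrow> bool" where
  "br_path P u = (br_step P u)\<^sup>*\<^sup>*"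

definition nash_set :: "'v set \<Rightarrow> ('v \<Rightarrow> ('v \<Rightarrow> real) \<Rightarrow> real) \<Rightarrow> ('v \<Rightarrow> real) set \<Rightarrow> ('v \<Rightarrow> real) set" where
  "nash_set P u X = {x \<in> X. \<forall>i\<in>P. x i \<in> best_resp u i x}"

definition glob_br_reachable :: "'v set \<Rightarrow> ('v \<Rightarrow> ('v \<Rightarrow> real) \<Rightarrow> real) \<Rightarrow> ('v \<Rightarrow> real) set \<Rightarrow> ('v \<Rightarrow> real) set \<Rightarrow> bool" where
  "glob_br_reachable P u X Y \<longleftrightarrow> (\<forall>x\<in>X. \<exists>y\<in>Y. br_path P u x y)"

definition br_invariant :: "'v set \<Rightarrow> ('v \<Rightarrow> ('v \<Rightarrow> real) \<Rightarrow> real) \<Rightarrow> ('v \<Rightarrow> real) set \<Rightarrow> ('v \<Rightarrow> real) set \<Rightarrow> bool" where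
  "br_invariant P u X Y \<longleftrightarrow> (\<forall>x\<in>Y. \<forall>y\<in>X. br_path P u x y \<longrightarrow> y \<in> Y)"

definition glob_br_stable :: "'v set \<Rightarrow> ('v \<Rightarrow> ('v \<Rightarrow> real) \<Rightarrow> real) \<Rightarrow> ('v \<Rightarrow> real) set \<Rightarrow> ('v \<Rightarrow> real) set \<Rightarrow> bool" where
  "glob_br_stable P u X Y \<longleftrightarrow> glob_br_reachable P u X Y \<and> br_invariant P u X Y"

definition profiles :: "('v \<Rightarrow> real) set" where
  "profiles = {x. \<forall>i. x i \<in> {-1, 1}}"

text \<open>Profiles of the S-restricted game with the players in R frozen to a*1,
  identified with the full profiles (y,z) having y = a*1.\<close>
definition frozen_profiles :: "'v set \<Rightarrow> real \<Rightarrow> ('v \<Rightarrow> real) set" where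
  "frozen_profiles R a = {x \<in> profiles. \<forall>i\<in>R. x i = a}"

end

theory Submission
  imports Defs
begin

(* Since G_R is unsigned, the field h_i + sum_j W_ij x_j of a player i in R equals, up to an
   error of at most w_i^S caused by S, its R-field h_i + w_i^{R+} - w_i^{R-}, where R+ and R-
   are the R-players playing +1 and -1.  Player i is forced up (down) when its R-field exceeds
   w_i^S (is below -w_i^S): then +1 (-1) is its unique best response whatever S plays.
   (h-,h+)-indecomposability says precisely that outside an R-consensus some R-player is forced
   to flip.  Flipping forced-up players to +1 while possible, and then forced-down players to
   -1, reaches a consensus: a downward flip lowers the R-field of everybody else and never
   creates a forced-up player.  The dominance condition w_i^R - |h_i| > w_i^S forces every
   R-player to agree with a consensus, so from a consensus profile the full BR-dynamics is the
   S-restricted one, and the Nash equilibria of the restricted game are Nash equilibria of the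
   full game. *)

lemma br_path_mono:
  assumes "P \<subseteq> Q" and "br_path P u x y"
  shows "br_path Q u x y"
proof -
  have "br_step P u a b \<longrightarrow> br_step Q u a b" for a b
    using assms(1) unfolding br_step_def by blast
  then show ?thesis
    using assms(2) mono_rtranclp unfolding br_path_def by metis
qed

lemma glob_br_reachable_mono:
  assumes "P \<subseteq> Q" and "Y \<subseteq> Y'" and "glob_br_reachable P u X Y"
  shows "glob_br_reachable Q u X Y'"
  using assms br_path_mono unfolding glob_br_reachable_def by blast

lemma glob_br_reachable_trans:
  assumes "glob_br_reachable P u X Y" and "glob_br_reachable P u Y Z"
  shows "glob_br_reachable P u X Z"
  using assms unfolding glob_br_reachable_def br_path_def by (meson rtranclp_trans)

lemma glob_br_reachable_Un:
  assumes "glob_br_reachable P u X Y" and "glob_br_reachable P u X' Y'"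
  shows "glob_br_reachable P u (X \<union> X') (Y \<union> Y')"
  using assms unfolding glob_br_reachable_def by blast

lemma br_invariant_Un:
  assumes "br_invariant P u X Y" and "br_invariant P u X Y'"
  shows "br_invariant P u X (Y \<union> Y')"
  using assms unfolding br_invariant_def by blast

lemma br_path_closed:
  assumes closed: "\<And>x y. x \<in> F \<Longrightarrow> br_step P u x y \<Longrightarrow> br_step S u x y \<and> y \<in> F"
    and "br_path P u x y" and "x \<in> F"
  shows "br_path S u x y \<and> y \<in> F"
  using assms(2,3) unfolding br_path_def
proof (induction rule: rtranclp_induct)
  case (step y z)
  then show ?case
    using closed[of y z] by (meson rtranclp.rtrancl_into_rtrancl)
qed simp

lemma br_invariant_closed:
  assumes closed: "\<And>x y. x \<in> F \<Longrightarrow> br_step P u x y \<Longrightarrow> br_step S u x y \<and> y \<in> F"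
    and "Y \<subseteq> F" and "br_invariant S u F Y"
  shows "br_invariant P u X Y"
  using assms br_path_closed[OF closed] unfolding br_invariant_def by blast

lemma br_step_upd:
  assumes "i \<in> P" and "x i \<noteq> b" and "b \<in> best_resp u i x"
  shows "br_step P u x (x(i := b))"
  using assms unfolding br_step_def by auto

lemma profiles_upd: "x \<in> profiles \<Longrightarrow> b \<in> {-1, 1} \<Longrightarrow> x(i := b) \<in> profiles"
  unfolding profiles_def by auto

definition snc_field :: "('v::finite \<Rightarrow> 'v \<Rightarrow> real) \<Rightarrow> ('v \<Rightarrow> real) \<Rightarrow> ('v \<Rightarrow> real) \<Rightarrow> 'v \<Rightarrow> real" where
  "snc_field W h x i = h i + (\<Sum>j\<in>UNIV. W i j * x j)"

lemma snc_util_upd: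
  assumes "W i i = 0"
  shows "snc_util W h i (x(i := b)) = b * snc_field W h x i"
proof -
  have "(\<Sum>j\<in>UNIV. W i j * (x(i := b)) j) = (\<Sum>j\<in>UNIV. W i j * x j)"
    using assms by (intro sum.cong) auto
  then show ?thesis
    unfolding snc_util_def snc_field_def by (simp add: algebra_simps)
qed

lemma snc_best_resp_iff:
  assumes "W i i = 0" and "a \<in> {-1, 1}"
  shows "a \<in> best_resp (snc_util W h) i x \<longleftrightarrow> 0 \<le> a * snc_field W h x i"
  using assms by (auto simp: best_resp_def snc_util_upd)

lemma wsum_nonneg: "0 \<le> wsum W i B"
  unfolding wsum_def by (simp add: sum_nonneg)

lemma wsum_mono: "finite B \<Longrightarrow> A \<subseteq> B \<Longrightarrow> wsum W i A \<le> wsum W i B"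
  unfolding wsum_def by (rule sum_mono2) auto

lemma wsum_insert_diag: "W i i = 0 \<Longrightarrow> wsum W i (insert i A) = wsum W i A"
  unfolding wsum_def by (cases "finite A") (auto simp: sum.insert_if)

lemma wsum_remove_diag: "W i i = 0 \<Longrightarrow> wsum W i (A - {i}) = wsum W i A"
  by (metis insert_Diff_single wsum_insert_diag)

locale snc_partition =
  fixes W :: "'v::finite \<Rightarrow> 'v \<Rightarrow> real" and h :: "'v \<Rightarrow> real" and R S :: "'v set"
  assumes zero_diag: "\<forall>i. W i i = 0"
    and disjoint: "R \<inter> S = {}" and cover: "R \<union> S = UNIV"
    and unsigned: "unsigned_on W R"
begin

definition R_plus :: "('v \<Rightarrow> real) \<Rightarrow> 'v set" where
  "R_plus x = {j \<in> R. x j = 1}"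

definition R_minus :: "('v \<Rightarrow> real) \<Rightarrow> 'v set" where
  "R_minus x = {j \<in> R. x j = -1}"

definition R_field :: "('v \<Rightarrow> real) \<Rightarrow> 'v \<Rightarrow> real" where
  "R_field x i = h i + wsum W i (R_plus x) - wsum W i (R_minus x)"

definition forced_up :: "('v \<Rightarrow> real) \<Rightarrow> 'v \<Rightarrow> bool" where
  "forced_up x i \<longleftrightarrow> wsum W i S < R_field x i"

definition forced_down :: "('v \<Rightarrow> real) \<Rightarrow> 'v \<Rightarrow> bool" where
  "forced_down x i \<longleftrightarrow> R_field x i < - wsum W i S"

lemma R_plus_R_minus:
  assumes "x \<in> profiles"
  shows "R = R_plus x \<union> R_minus x" and "R_plus x \<inter> R_minus x = {}"
  using assms unfolding R_plus_def R_minus_def profiles_def by auto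

lemma snc_field_R_field:
  assumes x: "x \<in> profiles" and i: "i \<in> R"
  shows "\<bar>snc_field W h x i - R_field x i\<bar> \<le> wsum W i S"
proof -
  have split_R_S: "(\<Sum>j\<in>UNIV. W i j * x j) = (\<Sum>j\<in>R. W i j * x j) + (\<Sum>j\<in>S. W i j * x j)"
    using disjoint cover by (metis finite sum.union_disjoint)
  have "(\<Sum>j\<in>R. W i j * x j) = (\<Sum>j\<in>R_plus x. W i j * x j) + (\<Sum>j\<in>R_minus x. W i j * x j)"
    using R_plus_R_minus[OF x] by (metis finite sum.union_disjoint)
  also have "\<dots> = wsum W i (R_plus x) - wsum W i (R_minus x)"
    using unsigned i unfolding wsum_def R_plus_def R_minus_def unsigned_on_def
    by (simp add: sum_negf)
  finally have R_part: "(\<Sum>j\<in>R. W i j * x j) = wsum W i (R_plus x) - wsum W i (R_minus x)" .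
  have "\<bar>\<Sum>j\<in>S. W i j * x j\<bar> \<le> (\<Sum>j\<in>S. \<bar>W i j * x j\<bar>)"
    by (rule sum_abs)
  also have "\<dots> = wsum W i S"
  proof -
    have "\<bar>x j\<bar> = 1" for j
    proof -
      have "x j \<in> {-1, 1}"
        using x unfolding profiles_def by blast
      then show ?thesis by auto
    qed
    then show ?thesis
      unfolding wsum_def by (simp add: abs_mult)
  qed
  finally show ?thesis
    using split_R_S R_part unfolding snc_field_def R_field_def by simp
qed

lemma best_resp_iff:
  "a \<in> {-1, 1} \<Longrightarrow> a \<in> best_resp (snc_util W h) i x \<longleftrightarrow> 0 \<le> a * snc_field W h x i"
  using snc_best_resp_iff zero_diag by blast

lemma forced_up_snc_field_pos:
  assumes "x \<in> profiles" and "i \<in> R" and "forced_up x i"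
  shows "0 < snc_field W h x i"
  using snc_field_R_field[OF assms(1,2)] assms(3) unfolding forced_up_def by linarith

lemma forced_down_snc_field_neg:
  assumes "x \<in> profiles" and "i \<in> R" and "forced_down x i"
  shows "snc_field W h x i < 0"
  using snc_field_R_field[OF assms(1,2)] assms(3) unfolding forced_down_def by linarith

lemma indecomposable_forced_flip:
  assumes indec: "indecomposable W R (\<lambda>i. h i - wsum W i S) (\<lambda>i. h i + wsum W i S)"
    and x: "x \<in> profiles" and "R_plus x \<noteq> {}" and "R_minus x \<noteq> {}"
  shows "(\<exists>i\<in>R_plus x. forced_down x i) \<or> (\<exists>i\<in>R_minus x. forced_up x i)"
proof -
  have "(\<exists>i\<in>R_plus x. wsum W i (R_plus x) + (h i + wsum W i S) < wsum W i (R_minus x)) \<or>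
    (\<exists>i\<in>R_minus x. wsum W i (R_minus x) - (h i - wsum W i S) < wsum W i (R_plus x))"
    using indec assms(3,4) R_plus_R_minus[OF x] unfolding indecomposable_def by blast
  then show ?thesis
    unfolding forced_up_def forced_down_def R_field_def by (auto simp: algebra_simps)
qed

lemma forced_up_br_step:
  assumes x: "x \<in> profiles" and i: "i \<in> R_minus x" and forced: "forced_up x i"
  shows "br_step UNIV (snc_util W h) x (x(i := 1))"
proof (rule br_step_upd)
  have "i \<in> R" using i unfolding R_minus_def by simp
  then show "1 \<in> best_resp (snc_util W h) i x"
    using forced_up_snc_field_pos[OF x _ forced] by (simp add: best_resp_iff)
  show "x i \<noteq> 1" using i unfolding R_minus_def by simp
qed simp

lemma forced_down_br_step:
  assumes x: "x \<in> profiles" and i: "i \<in> R_plus x" and forced: "forced_down x i"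
  shows "br_step UNIV (snc_util W h) x (x(i := -1))"
proof (rule br_step_upd)
  have "i \<in> R" using i unfolding R_plus_def by simp
  then show "-1 \<in> best_resp (snc_util W h) i x"
    using forced_down_snc_field_neg[OF x _ forced] by (simp add: best_resp_iff)
  show "x i \<noteq> -1" using i unfolding R_plus_def by simp
qed simp

lemma reach_no_forced_up:
  assumes "x \<in> profiles"
  shows "\<exists>y\<in>profiles. br_path UNIV (snc_util W h) x y \<and> (\<forall>i\<in>R_minus y. \<not> forced_up y i)"
  using assms
proof (induction "card (R_minus x)" arbitrary: x rule: less_induct)
  case less
  show ?case
  proof (cases "\<forall>i\<in>R_minus x. \<not> forced_up x i")
    case True
    then show ?thesis
      using less.prems unfolding br_path_def by blast
  next
    case False
    then obtain i where i: "i \<in> R_minus x" and forced: "forced_up x i"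
      by blast
    let ?y = "x(i := 1)"
    have "R_minus ?y = R_minus x - {i}"
      using i unfolding R_minus_def by auto
    then have "card (R_minus ?y) < card (R_minus x)"
      using i by (metis card_Diff1_less finite)
    moreover have "?y \<in> profiles"
      using less.prems by (rule profiles_upd) simp
    ultimately obtain z where "z \<in> profiles" "br_path UNIV (snc_util W h) ?y z"
      and "\<forall>j\<in>R_minus z. \<not> forced_up z j"
      using less.hyps by blast
    moreover have "br_step UNIV (snc_util W h) x ?y"
      by (rule forced_up_br_step[OF less.prems i forced])
    ultimately show ?thesis
      unfolding br_path_def by (meson converse_rtranclp_into_rtranclp)
  qed
qed

lemma forced_down_flip_keeps_no_forced_up:
  assumes i: "i \<in> R_plus x" and forced: "forced_down x i"
    and no_forced_up: "\<forall>j\<in>R_minus x. \<not> forced_up x j"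
  shows "\<forall>j\<in>R_minus (x(i := -1)). \<not> forced_up (x(i := -1)) j"
proof
  let ?y = "x(i := -1)"
  have plus: "R_plus ?y = R_plus x - {i}" and minus: "R_minus ?y = insert i (R_minus x)"
    using i unfolding R_plus_def R_minus_def by auto
  fix j assume j: "j \<in> R_minus ?y"
  show "\<not> forced_up ?y j"
  proof (cases "j = i")
    case True
    have "R_field ?y i = R_field x i"
      unfolding R_field_def plus minus using zero_diag by (simp add: wsum_insert_diag wsum_remove_diag)
    then show ?thesis
      using True forced wsum_nonneg[of W i S] unfolding forced_up_def forced_down_def by simp
  next
    case False
    then have "j \<in> R_minus x"
      using j minus by auto
    moreover have "wsum W j (R_plus ?y) \<le> wsum W j (R_plus x)"
      and "wsum W j (R_minus x) \<le> wsum W j (R_minus ?y)"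
      unfolding plus minus by (auto intro: wsum_mono)
    ultimately show ?thesis
      using no_forced_up unfolding forced_up_def R_field_def by fastforce
  qed
qed

lemma reach_consensus_from_no_forced_up:
  assumes indec: "indecomposable W R (\<lambda>i. h i - wsum W i S) (\<lambda>i. h i + wsum W i S)"
    and "x \<in> profiles" and "\<forall>i\<in>R_minus x. \<not> forced_up x i"
  shows "\<exists>y\<in>frozen_profiles R 1 \<union> frozen_profiles R (-1). br_path UNIV (snc_util W h) x y"
  using assms(2,3)
proof (induction "card (R_plus x)" arbitrary: x rule: less_induct)
  case less
  note x = less.prems(1) and no_forced_up = less.prems(2)
  show ?case
  proof (cases "R_plus x = {} \<or> R_minus x = {}")
    case True
    then have "x \<in> frozen_profiles R 1 \<union> frozen_profiles R (-1)"
      using x R_plus_R_minus[OF x] unfolding frozen_profiles_def R_plus_def R_minus_def by auto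
    then show ?thesis
      unfolding br_path_def by blast
  next
    case False
    then obtain i where i: "i \<in> R_plus x" and forced: "forced_down x i"
      using indecomposable_forced_flip[OF indec x] no_forced_up by blast
    let ?y = "x(i := -1)"
    have "R_plus ?y = R_plus x - {i}"
      using i unfolding R_plus_def by auto
    then have "card (R_plus ?y) < card (R_plus x)"
      using i by (metis card_Diff1_less finite)
    moreover have "?y \<in> profiles"
      using x by (rule profiles_upd) simp
    moreover note forced_down_flip_keeps_no_forced_up[OF i forced no_forced_up]
    ultimately obtain z where "z \<in> frozen_profiles R 1 \<union> frozen_profiles R (-1)"
      and "br_path UNIV (snc_util W h) ?y z"
      using less.hyps by blast
    moreover have "br_step UNIV (snc_util W h) x ?y"
      by (rule forced_down_br_step[OF x i forced])
    ultimately show ?thesis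
      unfolding br_path_def by (meson converse_rtranclp_into_rtranclp)
  qed
qed

lemma consensus_reachable:
  assumes "indecomposable W R (\<lambda>i. h i - wsum W i S) (\<lambda>i. h i + wsum W i S)"
  shows "glob_br_reachable UNIV (snc_util W h) profiles (frozen_profiles R 1 \<union> frozen_profiles R (-1))"
  unfolding glob_br_reachable_def
proof
  fix x :: "'v \<Rightarrow> real" assume "x \<in> profiles"
  then obtain y where "y \<in> profiles" and "br_path UNIV (snc_util W h) x y"
    and "\<forall>i\<in>R_minus y. \<not> forced_up y i"
    using reach_no_forced_up by blast
  then show "\<exists>z\<in>frozen_profiles R 1 \<union> frozen_profiles R (-1). br_path UNIV (snc_util W h) x z"
    using reach_consensus_from_no_forced_up[OF assms] unfolding br_path_def
    by (meson rtranclp_trans)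
qed

lemma frozen_best_resp:
  assumes dom: "wsum W i R - \<bar>h i\<bar> > wsum W i S"
    and a: "a \<in> {-1, 1}" and x: "x \<in> frozen_profiles R a" and i: "i \<in> R"
  shows "best_resp (snc_util W h) i x = {a}"
proof -
  have xp: "x \<in> profiles" and xR: "\<forall>j\<in>R. x j = a"
    using x unfolding frozen_profiles_def by auto
  have "0 < a * snc_field W h x i"
  proof (cases "a = 1")
    case True
    then have "R_plus x = R" and "R_minus x = {}"
      using xR unfolding R_plus_def R_minus_def by auto
    then have "forced_up x i"
      using dom unfolding forced_up_def R_field_def wsum_def by simp
    then show ?thesis
      using True forced_up_snc_field_pos[OF xp i] by simp
  next
    case False
    then have "a = -1" and "R_plus x = {}" and "R_minus x = R"
      using a xR unfolding R_plus_def R_minus_def by auto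
    moreover have "forced_down x i"
      using dom calculation(2,3) unfolding forced_down_def R_field_def wsum_def by simp
    ultimately show ?thesis
      using forced_down_snc_field_neg[OF xp i] by simp
  qed
  then have "b \<in> best_resp (snc_util W h) i x \<longleftrightarrow> b = a" for b
  proof (cases "b \<in> {-1, 1}")
    case True
    then show ?thesis
      using a \<open>0 < a * snc_field W h x i\<close> by (auto simp: best_resp_iff)
  next
    case False
    then show ?thesis
      using a unfolding best_resp_def by auto
  qed
  then show ?thesis
    by auto
qed

lemma frozen_br_step:
  assumes dom: "\<forall>i\<in>R. wsum W i R - \<bar>h i\<bar> > wsum W i S"
    and a: "a \<in> {-1, 1}" and x: "x \<in> frozen_profiles R a"
    and step: "br_step UNIV (snc_util W h) x y"
  shows "br_step S (snc_util W h) x y \<and> y \<in> frozen_profiles R a"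
proof -
  obtain i where y: "y = x(i := y i)" "y i \<noteq> x i" "y i \<in> best_resp (snc_util W h) i x"
    using step unfolding br_step_def by blast
  have xp: "x \<in> profiles" and xR: "\<forall>j\<in>R. x j = a"
    using x unfolding frozen_profiles_def by auto
  have "i \<notin> R"
  proof
    assume i: "i \<in> R"
    then have "y i = a"
      using y(3) frozen_best_resp[OF _ a x i] dom by simp
    then show False
      using y(2) xR i by simp
  qed
  then have "i \<in> S"
    using cover by auto
  have "y \<in> profiles"
  proof -
    have "y i \<in> {-1, 1}"
      using y(3) unfolding best_resp_def by blast
    then show ?thesis
      using profiles_upd[OF xp] y(1) by metis
  qed
  moreover have "\<forall>j\<in>R. y j = a"
    using xR \<open>i \<notin> R\<close> by (subst y(1)) auto
  ultimately show ?thesis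
    using y \<open>i \<in> S\<close> unfolding br_step_def frozen_profiles_def by blast
qed

lemma frozen_nash_set:
  assumes dom: "\<forall>i\<in>R. wsum W i R - \<bar>h i\<bar> > wsum W i S" and a: "a \<in> {-1, 1}"
  shows "nash_set S (snc_util W h) (frozen_profiles R a)
    \<subseteq> {x \<in> nash_set UNIV (snc_util W h) profiles. (\<forall>i\<in>R. x i = 1) \<or> (\<forall>i\<in>R. x i = -1)}"
proof
  fix x assume x: "x \<in> nash_set S (snc_util W h) (frozen_profiles R a)"
  then have xF: "x \<in> frozen_profiles R a"
    unfolding nash_set_def by simp
  have "x i \<in> best_resp (snc_util W h) i x" for i
  proof (cases "i \<in> R")
    case True
    then have "x i = a"
      using xF unfolding frozen_profiles_def by simp
    then show ?thesis
      using frozen_best_resp[OF bspec[OF dom True] a xF True] by simp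
  next
    case False
    then show ?thesis
      using x cover unfolding nash_set_def by auto
  qed
  moreover have "x \<in> profiles" and "\<forall>i\<in>R. x i = a"
    using xF unfolding frozen_profiles_def by auto
  ultimately show "x \<in> {x \<in> nash_set UNIV (snc_util W h) profiles. (\<forall>i\<in>R. x i = 1) \<or> (\<forall>i\<in>R. x i = -1)}"
    using a unfolding nash_set_def by auto
qed

lemma glob_br_reachable_via_consensus:
  assumes indec: "indecomposable W R (\<lambda>i. h i - wsum W i S) (\<lambda>i. h i + wsum W i S)"
    and reach: "\<And>a. a \<in> {-1, 1} \<Longrightarrow> glob_br_reachable S (snc_util W h) (frozen_profiles R a) (Y a)"
  shows "glob_br_reachable UNIV (snc_util W h) profiles (Y 1 \<union> Y (-1))"
proof -
  have "glob_br_reachable S (snc_util W h) (frozen_profiles R 1 \<union> frozen_profiles R (-1)) (Y 1 \<union> Y (-1))"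
    using reach by (simp add: glob_br_reachable_Un)
  then have "glob_br_reachable UNIV (snc_util W h) (frozen_profiles R 1 \<union> frozen_profiles R (-1)) (Y 1 \<union> Y (-1))"
    by (rule glob_br_reachable_mono[rotated 2]) auto
  with consensus_reachable[OF indec] show ?thesis
    by (rule glob_br_reachable_trans)
qed

lemma br_invariant_of_frozen:
  assumes dom: "\<forall>i\<in>R. wsum W i R - \<bar>h i\<bar> > wsum W i S" and a: "a \<in> {-1, 1}"
    and "Y \<subseteq> frozen_profiles R a" and "br_invariant S (snc_util W h) (frozen_profiles R a) Y"
  shows "br_invariant UNIV (snc_util W h) X Y"
  using frozen_br_step[OF dom a] assms(3,4) by (rule br_invariant_closed)

lemma glob_br_stable_via_consensus:
  assumes dom: "\<forall>i\<in>R. wsum W i R - \<bar>h i\<bar> > wsum W i S"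
    and indec: "indecomposable W R (\<lambda>i. h i - wsum W i S) (\<lambda>i. h i + wsum W i S)"
    and stable: "\<And>a. a \<in> {-1, 1} \<Longrightarrow>
      Y a \<subseteq> nash_set S (snc_util W h) (frozen_profiles R a) \<and>
      glob_br_stable S (snc_util W h) (frozen_profiles R a) (Y a)"
  shows "glob_br_stable UNIV (snc_util W h) profiles (Y 1 \<union> Y (-1))"
proof -
  have "glob_br_reachable UNIV (snc_util W h) profiles (Y 1 \<union> Y (-1))"
    using stable unfolding glob_br_stable_def
    by (intro glob_br_reachable_via_consensus[OF indec, of Y]) blast
  moreover have "br_invariant UNIV (snc_util W h) profiles (Y a)" if a: "a \<in> {-1, 1}" for a
  proof (rule br_invariant_of_frozen[OF dom a])
    show "Y a \<subseteq> frozen_profiles R a"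
      using stable[OF a] unfolding nash_set_def by blast
    show "br_invariant S (snc_util W h) (frozen_profiles R a) (Y a)"
      using stable[OF a] unfolding glob_br_stable_def by blast
  qed
  ultimately show ?thesis
    unfolding glob_br_stable_def by (simp add: br_invariant_Un)
qed

end

theorem proposition5:
  fixes W :: "'v::finite \<Rightarrow> 'v \<Rightarrow> real" and h :: "'v \<Rightarrow> real" and R S :: "'v set"
  assumes zero_diag: "\<forall>i. W i i = 0"
    and part: "R \<inter> S = {}" "R \<union> S = UNIV"
    and unsigned: "unsigned_on W R"
    and indec: "indecomposable W R (\<lambda>i. h i - wsum W i S) (\<lambda>i. h i + wsum W i S)"
    and dom: "\<forall>i\<in>R. wsum W i R - \<bar>h i\<bar> > wsum W i S"
  shows
   "((\<forall>a\<in>{-1, 1::real}. glob_br_reachable S (snc_util W h) (frozen_profiles R a)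
          (nash_set S (snc_util W h) (frozen_profiles R a)))
     \<longrightarrow> {x \<in> nash_set UNIV (snc_util W h) profiles. (\<forall>i\<in>R. x i = 1) \<or> (\<forall>i\<in>R. x i = -1)} \<noteq> {}
       \<and> glob_br_reachable UNIV (snc_util W h) profiles
          {x \<in> nash_set UNIV (snc_util W h) profiles. (\<forall>i\<in>R. x i = 1) \<or> (\<forall>i\<in>R. x i = -1)})
  \<and> ((\<forall>a\<in>{-1, 1::real}. \<exists>Nb. Nb \<noteq> {} \<and> Nb \<subseteq> nash_set S (snc_util W h) (frozen_profiles R a)
          \<and> glob_br_stable S (snc_util W h) (frozen_profiles R a) Nb)
     \<longrightarrow> (\<exists>Nb. Nb \<noteq> {}
          \<and> Nb \<subseteq> {x \<in> nash_set UNIV (snc_util W h) profiles. (\<forall>i\<in>R. x i = 1) \<or> (\<forall>i\<in>R. x i = -1)}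
          \<and> glob_br_stable UNIV (snc_util W h) profiles Nb))"
proof -
  interpret snc_partition W h R S
    using zero_diag part unsigned by unfold_locales
  let ?u = "snc_util W h" and ?F = "frozen_profiles R"
  let ?N = "{x \<in> nash_set UNIV ?u profiles. (\<forall>i\<in>R. x i = 1) \<or> (\<forall>i\<in>R. x i = -1)}"
  show ?thesis
  proof (intro conjI impI)
    assume "\<forall>a\<in>{-1, 1::real}. glob_br_reachable S ?u (?F a) (nash_set S ?u (?F a))"
    then have "glob_br_reachable UNIV ?u profiles (nash_set S ?u (?F 1) \<union> nash_set S ?u (?F (-1)))"
      using glob_br_reachable_via_consensus[OF indec, of "\<lambda>a. nash_set S ?u (?F a)"] by blast
    then show reach: "glob_br_reachable UNIV ?u profiles ?N"
      by (rule glob_br_reachable_mono[rotated 2])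
        (use frozen_nash_set[OF dom, of 1] frozen_nash_set[OF dom, of "-1"] in auto)
    have "(\<lambda>_. 1) \<in> profiles"
      unfolding profiles_def by simp
    then show "?N \<noteq> {}"
      using reach unfolding glob_br_reachable_def by blast
  next
    assume "\<forall>a\<in>{-1, 1::real}. \<exists>Nb. Nb \<noteq> {} \<and> Nb \<subseteq> nash_set S ?u (?F a) \<and> glob_br_stable S ?u (?F a) Nb"
    then obtain Nb where "\<forall>a\<in>{-1, 1::real}.
        Nb a \<noteq> {} \<and> Nb a \<subseteq> nash_set S ?u (?F a) \<and> glob_br_stable S ?u (?F a) (Nb a)"
      by (metis bchoice)
    note Nb = bspec[OF this]
    have "glob_br_stable UNIV ?u profiles (Nb 1 \<union> Nb (-1))"
      using Nb by (intro glob_br_stable_via_consensus[OF dom indec, of Nb]) blast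
    moreover have "Nb 1 \<union> Nb (-1) \<subseteq> ?N"
      using Nb[of 1] Nb[of "-1"] frozen_nash_set[OF dom, of 1] frozen_nash_set[OF dom, of "-1"] by auto
    ultimately show "\<exists>Nb. Nb \<noteq> {} \<and> Nb \<subseteq> ?N \<and> glob_br_stable UNIV ?u profiles Nb"
      using Nb[of 1] by blast
  qed
qed

end
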